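(* Let $\mathbf{V}$ be a finite tuple of random variables with joint distribution $\mathbb{P}(\mathbf{V})$, consisting of system variables $\{X_j\}_{j\in\mathcal{J}}$ and context variables $\{C_i\}_{i\in\mathcal{I}}$, and let $\mathcal{G}$ be an acyclic directed mixed graph (ADMG) on $\mathbf{V}$ (the causal graph). Let $C_1$ be a distinguished context variable taking values in $\{0,1\}$ (the source/target domain indicator, with both values having positive probability), and let $Y = X_j$ be a distinguished system variable (the target variable). Assume: (i) $\mathbb{P}(\mathbf{V})$ is Markov and faithful with respect to $\mathcal{G}$; (ii) for all subsets $\mathbf{A},\mathbf{B},\mathbf{S}\subseteq\mathbf{V}$ such that $\mathbf{A}\cup\mathbf{B}\cup\mathbf{S}$ contains $Y$ but not $C_1$: if $\mathbf{A}\perp\!\!\!\perp \mathbf{B}\mid \mathbf{S}$ holds in $\mathbb{P}(\mathbf{V}\mid C_1=0)$, then $\mathbf{A}\perp\!\!\!\perp \mathbf{B}\mid \mathbf{S}$ holds in $\mathbb{P}(\mathbf{V}\mid C_1=1)$; (iii) $\mathcal{G}$ contains no directed edge $C_1\to Y$. Then for all subsets $\mathbf{A},\mathbf{B},\mathbf{S}\subseteq\mathbf{V}$ such that $\mathbf{A}\cup\mathbf{B}\cup\mathbf{S}$ contains $Y$ but not $C_1$, the following are equivalent: (1) $\mathbf{A}\perp\!\!\!\perp\mathbf{B}\mid\mathbf{S}$ in $\mathbb{P}(\mathbf{V}\mid C_1=0)$; (2) $\mathbf{A}\perp\!\!\!\perp\mathbf{B}\mid\mathbf{S}\cup\{C_1\}$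 in $\mathbb{P}(\mathbf{V})$; (3) $\mathbf{A}$ and $\mathbf{B}$ are d-separated by $\mathbf{S}\cup\{C_1\}$ in $\mathcal{G}$.
   Context: The data-generating process is a structural causal model: each context variable is $C_i = g_i(\mathbf{E}_{\mathrm{pa}(i)\cap\mathcal{K}})$ and each system variable is $X_j = f_j(\mathbf{X}_{\mathrm{pa}(j)\cap\mathcal{J}},\mathbf{C}_{\mathrm{pa}(j)\cap\mathcal{I}},\mathbf{E}_{\mathrm{pa}(j)\cap\mathcal{K}})$, with jointly independent exogenous latent noise variables $(E_k)_{k\in\mathcal{K}}$. Its causal graph $\mathcal{G}$ has nodes the context and system variables, a directed edge $l_1\to l_2$ iff $l_1$ is a parent of $l_2$, and a bidirected edge $l_1\leftrightarrow l_2$ iff they share a latent parent $E_k$; it is assumed acyclic (an ADMG). d-separation in an ADMG is the usual (m-)separation criterion. "Markov w.r.t. $\mathcal{G}$" means every d-separation $\mathbf{A}\perp\mathbf{B}\mid\mathbf{S}$ in $\mathcal{G}$ implies the conditional independence $\mathbf{A}\perp\!\!\!\perp\mathbf{B}\mid\mathbf{S}$ in $\mathbb{P}(\mathbf{V})$; "faithful" means the converse: every conditional independence in $\mathbb{P}(\mathbf{V})$ corresponds to a d-separation in $\mathcal{G}$. Conditional independence "in $\mathbb{P}(\mathbf{V}\mid C_1=c)$" refers to the pooled (mixture) distribution over all domains with $C_1=c$. *)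

theory Defs
  imports "HOL-Probability.Probability"
begin

text \<open>An ADMG on the node set V is given by a set D of directed edges (a,b) meaning a \<rightarrow> b
  and a symmetric set Bi of bidirected edges.\<close>

definition admg :: "'v set \<Rightarrow> ('v \<times> 'v) set \<Rightarrow> ('v \<times> 'v) set \<Rightarrow> bool" where
  "admg V D Bi \<longleftrightarrow> D \<subseteq> V \<times> V \<and> Bi \<subseteq> V \<times> V \<and> sym Bi \<and> (\<forall>v. (v, v) \<notin> Bi) \<and> acyclic D"

datatype ekind = Fwd | Bwd | Bid

definition edge_ok :: "('v \<times> 'v) set \<Rightarrow> ('v \<times> 'v) set \<Rightarrow> 'v \<Rightarrow> ekind \<Rightarrow> 'v \<Rightarrow> bool" where
  "edge_ok D Bi x k y = (case k of Fwd \<Rightarrow> (x, y) \<in> D | Bwd \<Rightarrow> (y, x) \<in> D | Bid \<Rightarrow> (x, y) \<in> Bi)"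

definition is_walk :: "('v \<times> 'v) set \<Rightarrow> ('v \<times> 'v) set \<Rightarrow> 'v list \<Rightarrow> ekind list \<Rightarrow> bool" where
  "is_walk D Bi vs es \<longleftrightarrow> length vs = Suc (length es) \<and>
     (\<forall>i < length es. edge_ok D Bi (vs ! i) (es ! i) (vs ! Suc i))"

definition head_right :: "ekind \<Rightarrow> bool" where
  "head_right k \<longleftrightarrow> k = Fwd \<or> k = Bid"

definition head_left :: "ekind \<Rightarrow> bool" where
  "head_left k \<longleftrightarrow> k = Bwd \<or> k = Bid"

definition collider :: "ekind list \<Rightarrow> nat \<Rightarrow> bool" where
  "collider es i \<longleftrightarrow> 0 < i \<and> i < length es \<and> head_right (es ! (i - 1)) \<and> head_left (es ! i)"

definition ancestors :: "('v \<times> 'v) set \<Rightarrow> 'v set \<Rightarrow> 'v set" where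
  "ancestors D S = {a. \<exists>s \<in> S. (a, s) \<in> D\<^sup>*}"

text \<open>A walk is S-open iff every collider is an ancestor of S and every non-collider
  (including both end nodes) is not in S.\<close>
definition d_open :: "('v \<times> 'v) set \<Rightarrow> 'v set \<Rightarrow> 'v list \<Rightarrow> ekind list \<Rightarrow> bool" where
  "d_open D S vs es \<longleftrightarrow>
     (\<forall>i < length vs. if collider es i then vs ! i \<in> ancestors D S else vs ! i \<notin> S)"

definition d_separated :: "('v \<times> 'v) set \<Rightarrow> ('v \<times> 'v) set \<Rightarrow> 'v set \<Rightarrow> 'v set \<Rightarrow> 'v set \<Rightarrow> bool" where
  "d_separated D Bi A B S \<longleftrightarrow>
     (\<forall>vs es. is_walk D Bi vs es \<and> hd vs \<in> A \<and> last vs \<in> B \<longrightarrow> \<not> d_open D S vs es)"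

definition gen_sigma :: "'a measure \<Rightarrow> ('v \<Rightarrow> 'a \<Rightarrow> 'b) \<Rightarrow> ('v \<Rightarrow> 'b measure) \<Rightarrow> 'v set \<Rightarrow> 'a measure" where
  "gen_sigma M X N A = sigma (space M) {X v -` E \<inter> space M | v E. v \<in> A \<and> E \<in> sets (N v)}"

definition cond_indep :: "'a measure \<Rightarrow> ('v \<Rightarrow> 'a \<Rightarrow> 'b) \<Rightarrow> ('v \<Rightarrow> 'b measure) \<Rightarrow>
    'v set \<Rightarrow> 'v set \<Rightarrow> 'v set \<Rightarrow> bool" where
  "cond_indep M X N A B S \<longleftrightarrow>
     (\<forall>E \<in> sets (gen_sigma M X N A). \<forall>F \<in> sets (gen_sigma M X N B).
        AE \<omega> in M. real_cond_exp M (gen_sigma M X N S) (indicator (E \<inter> F)) \<omega> =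
          real_cond_exp M (gen_sigma M X N S) (indicator E) \<omega> *
          real_cond_exp M (gen_sigma M X N S) (indicator F) \<omega>)"

definition cond_on :: "'a measure \<Rightarrow> ('v \<Rightarrow> 'a \<Rightarrow> 'b) \<Rightarrow> 'v \<Rightarrow> 'b \<Rightarrow> 'a measure" where
  "cond_on M X c d = uniform_measure M {\<omega> \<in> space M. X c \<omega> = d}"

end

theory Submission
  imports Defs
begin

text \<open>Let \<open>T = {C\<^sub>1 = d}\<close>. On \<open>T\<close>, the \<open>\<sigma>\<close>-algebras generated by \<open>X\<^sub>S\<close> and by
  \<open>(X\<^sub>S, C\<^sub>1)\<close> have the same trace, so the conditional expectation given \<open>(X\<^sub>S, C\<^sub>1)\<close> agrees
  almost surely on \<open>T\<close> with the conditional expectation given \<open>X\<^sub>S\<close> in the domain distribution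
  \<open>P(\<cdot> | C\<^sub>1 = d)\<close>. Hence \<open>A \<perp> B | S \<union> {C\<^sub>1}\<close> holds in the pooled distribution iff
  \<open>A \<perp> B | S\<close> holds in every domain. Since \<open>C\<^sub>1\<close> is binary, the transfer assumption turns
  independence in the source domain into independence in both domains, which gives (1) \<open>\<Leftrightarrow>\<close> (2);
  (2) \<open>\<Leftrightarrow>\<close> (3) is Markov property plus faithfulness.\<close>

lemma uniform_measure_eq_density:
  assumes "T \<in> sets M" "measure M T > 0"
  shows "uniform_measure M T = density M (\<lambda>x. ennreal (indicator T x / measure M T))"
proof -
  have "emeasure M T = ennreal (measure M T)"
    using assms by (intro emeasure_eq_ennreal_measure) (auto simp: measure_def)
  then have "(indicator T x :: ennreal) / emeasure M T = ennreal (indicator T x / measure M T)" for x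
    using assms by (auto split: split_indicator) (metis divide_ennreal ennreal_1 zero_le_one)
  then show ?thesis unfolding uniform_measure_def by simp
qed

lemma
  fixes u :: "'a \<Rightarrow> real"
  assumes T: "T \<in> sets M" "measure M T > 0" and u: "u \<in> borel_measurable M"
  shows integrable_uniform_measure_iff:
      "integrable (uniform_measure M T) u \<longleftrightarrow> integrable M (\<lambda>x. indicator T x * u x)"
    and integral_uniform_measure:
      "integral\<^sup>L (uniform_measure M T) u = (LINT x|M. indicator T x * u x) / measure M T"
proof -
  have dens: "uniform_measure M T = density M (\<lambda>x. ennreal (indicator T x / measure M T))"
    using T by (rule uniform_measure_eq_density)
  have eq: "(\<lambda>x. (indicator T x / measure M T) * u x) = (\<lambda>x. (indicator T x * u x) * (1 / measure M T))"
    by auto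
  show "integrable (uniform_measure M T) u \<longleftrightarrow> integrable M (\<lambda>x. indicator T x * u x)"
    unfolding dens using T u integrable_mult_right_iff[of M "\<lambda>x. indicator T x * u x" "1 / measure M T"]
    by (subst integrable_density) (auto simp: eq)
  show "integral\<^sup>L (uniform_measure M T) u = (LINT x|M. indicator T x * u x) / measure M T"
    unfolding dens using T u by (subst integral_density) (auto simp: eq)
qed

lemma set_integral_uniform_measure:
  fixes u :: "'a \<Rightarrow> real"
  assumes T: "T \<in> sets M" "measure M T > 0" and u: "u \<in> borel_measurable M" and B: "B \<in> sets M"
  shows "(\<integral>x\<in>B. u x \<partial>uniform_measure M T) = (\<integral>x\<in>B \<inter> T. u x \<partial>M) / measure M T"
proof -
  have "(\<lambda>x. indicator T x * (indicator B x * u x)) = (\<lambda>x. indicator (B \<inter> T) x * u x)"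
    by (auto split: split_indicator)
  then show ?thesis
    using integral_uniform_measure[OF T, of "\<lambda>x. indicator B x * u x"] u B
    by (simp add: set_lebesgue_integral_def)
qed

lemma finite_measure_subalgebra_uniform_measure:
  assumes "prob_space M" "T \<in> sets M" "measure M T > 0" "subalgebra M F"
  shows "finite_measure_subalgebra (uniform_measure M T) F"
proof -
  interpret prob_space M by fact
  have "prob_space (uniform_measure M T)"
    using assms by (intro prob_space_uniform_measure) (auto simp: emeasure_eq_measure)
  moreover have "subalgebra (uniform_measure M T) F"
    using assms(4) by (auto simp: subalgebra_def)
  ultimately show ?thesis
    by (intro finite_measure_subalgebra.intro finite_measure_subalgebra_axioms.intro)
       (auto simp: prob_space_def)
qed

lemma
  fixes f :: "'a \<Rightarrow> real"
  assumes P: "prob_space M" and T: "T \<in> sets M" "measure M T > 0" and F: "subalgebra M F"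
    and f: "integrable M f"
  shows integrable_indicator_real_cond_exp_uniform_measure:
      "integrable M (\<lambda>x. indicator T x * real_cond_exp (uniform_measure M T) F f x)"
    and set_integral_real_cond_exp_uniform_measure:
      "B \<in> sets F \<Longrightarrow>
        (\<integral>x\<in>B \<inter> T. real_cond_exp (uniform_measure M T) F f x \<partial>M) = (\<integral>x\<in>B \<inter> T. f x \<partial>M)"
proof -
  interpret MT: finite_measure_subalgebra "uniform_measure M T" F
    using finite_measure_subalgebra_uniform_measure[OF P T F] .
  let ?c = "real_cond_exp (uniform_measure M T) F f"
  have measurable_eq: "borel_measurable (uniform_measure M T) = (borel_measurable M :: ('a \<Rightarrow> real) set)"
    by (rule measurable_cong_sets) simp_all
  have fT: "integrable (uniform_measure M T) f"
    using f integrable_mult_indicator[OF T(1) f] by (simp add: integrable_uniform_measure_iff[OF T])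
  have cM: "?c \<in> borel_measurable M"
    using borel_measurable_cond_exp2 measurable_eq by blast
  show "integrable M (\<lambda>x. indicator T x * ?c x)"
    using MT.real_cond_exp_int(1)[OF fT] cM by (simp add: integrable_uniform_measure_iff[OF T])
  assume B: "B \<in> sets F"
  then have BM: "B \<in> sets M" using F by (auto simp: subalgebra_def)
  have "(\<integral>x\<in>B \<inter> T. ?c x \<partial>M) = measure M T * (\<integral>x\<in>B. ?c x \<partial>uniform_measure M T)"
    using set_integral_uniform_measure[OF T cM BM] T(2) by simp
  also have "\<dots> = measure M T * (\<integral>x\<in>B. f x \<partial>uniform_measure M T)"
    using MT.real_cond_exp_intA[OF fT B] by simp
  also have "\<dots> = (\<integral>x\<in>B \<inter> T. f x \<partial>M)"
    using set_integral_uniform_measure[OF T _ BM, of f] f T(2) by simp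
  finally show "(\<integral>x\<in>B \<inter> T. ?c x \<partial>M) = (\<integral>x\<in>B \<inter> T. f x \<partial>M)" .
qed

text \<open>The witness \<open>g\<close> for the characterisation of \<open>E[f | F']\<close> glues the conditional
  expectation in the restricted measure on \<open>T\<close> with \<open>E[f | F']\<close> itself off \<open>T\<close>.\<close>

lemma AE_real_cond_exp_eq_uniform_measure:
  fixes f :: "'a \<Rightarrow> real"
  assumes P: "prob_space M" and T: "T \<in> sets M" "measure M T > 0"
    and F: "subalgebra M F" and F': "subalgebra M F'" and FF': "sets F \<subseteq> sets F'"
    and TF': "T \<in> sets F'" and trace: "\<And>A. A \<in> sets F' \<Longrightarrow> \<exists>B\<in>sets F. A \<inter> T = B \<inter> T"
    and f: "integrable M f"
  shows "AE x in M. x \<in> T \<longrightarrow> real_cond_exp M F' f x = real_cond_exp (uniform_measure M T) F f x"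
proof -
  interpret F': finite_measure_subalgebra M F'
    using P F' by (intro finite_measure_subalgebra.intro finite_measure_subalgebra_axioms.intro)
      (auto simp: prob_space_def)
  define c where "c = real_cond_exp (uniform_measure M T) F f"
  define h where "h = real_cond_exp M F' f"
  define g where "g x = indicator T x * c x + indicator (space M - T) x * h x" for x
  have TcF': "space M - T \<in> sets F'"
    using TF' F' by (metis sets.compl_sets subalgebra_def)
  have TcM: "space M - T \<in> sets M"
    using T(1) by (rule sets.compl_sets)
  have gF': "g \<in> borel_measurable F'"
  proof -
    have "c \<in> borel_measurable F'"
      unfolding c_def using FF' F F' by (metis borel_measurable_cond_exp measurable_from_subalg subalgebra_def)
    then show ?thesis
      unfolding g_def h_def using TF' TcF' by measurable
  qed
  have gint: "integrable M g"
    unfolding g_def c_def h_def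
    using integrable_indicator_real_cond_exp_uniform_measure[OF P T F f]
      integrable_mult_indicator[OF TcM F'.real_cond_exp_int(1)[OF f]] by auto
  have "AE x in M. h x = g x"
    unfolding h_def
  proof (rule F'.real_cond_exp_charact[OF _ f gint gF'])
    fix A assume A: "A \<in> sets F'"
    then have AM: "A \<in> sets M" and ADF': "A - T \<in> sets F'"
      using F' TF' by (auto simp: subalgebra_def)
    obtain B where B: "B \<in> sets F" "A \<inter> T = B \<inter> T"
      using trace[OF A] by blast
    have disjoint: "A \<inter> T \<inter> (A - T) = {}" by blast
    have split: "(\<integral>x\<in>A. u x \<partial>M) = (\<integral>x\<in>A \<inter> T. u x \<partial>M) + (\<integral>x\<in>A - T. u x \<partial>M)"
      if "integrable M u" for u :: "'a \<Rightarrow> real"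
      using set_integral_Un[OF disjoint, of M u] AM T(1)
        integrable_mult_indicator[of "A \<inter> T" M u] integrable_mult_indicator[of "A - T" M u] that
      by (simp add: set_integrable_def Int_Diff_Un)
    have "(\<integral>x\<in>A \<inter> T. g x \<partial>M) = (\<integral>x\<in>B \<inter> T. c x \<partial>M)"
      unfolding B(2)[symmetric] using AM T(1) by (intro set_lebesgue_integral_cong) (auto simp: g_def)
    also have "\<dots> = (\<integral>x\<in>A \<inter> T. f x \<partial>M)"
      unfolding c_def B(2) using set_integral_real_cond_exp_uniform_measure[OF P T F f B(1)] .
    finally have on_T: "(\<integral>x\<in>A \<inter> T. g x \<partial>M) = (\<integral>x\<in>A \<inter> T. f x \<partial>M)" .
    have "(\<integral>x\<in>A - T. g x \<partial>M) = (\<integral>x\<in>A - T. h x \<partial>M)"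
      using AM T(1) sets.sets_into_space[OF AM]
      by (intro set_lebesgue_integral_cong) (auto simp: g_def)
    also have "\<dots> = (\<integral>x\<in>A - T. f x \<partial>M)"
      unfolding h_def using F'.real_cond_exp_intA[OF f ADF'] by simp
    finally have off_T: "(\<integral>x\<in>A - T. g x \<partial>M) = (\<integral>x\<in>A - T. f x \<partial>M)" .
    show "(\<integral>x\<in>A. f x \<partial>M) = (\<integral>x\<in>A. g x \<partial>M)"
      using split[OF f] split[OF gint] on_T off_T by simp
  qed
  then show ?thesis
    by eventually_elim (auto simp: g_def c_def h_def split: split_indicator)
qed

definition cond_indep_at :: "'a measure \<Rightarrow> 'a measure \<Rightarrow> 'a set \<Rightarrow> 'a set \<Rightarrow> 'a \<Rightarrow> bool" where
  "cond_indep_at M F E G x \<longleftrightarrow>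
     real_cond_exp M F (indicator (E \<inter> G)) x =
       real_cond_exp M F (indicator E) x * real_cond_exp M F (indicator G) x"

lemma cond_indep_iff_cond_indep_at:
  "cond_indep M X N A B S \<longleftrightarrow>
     (\<forall>E\<in>sets (gen_sigma M X N A). \<forall>G\<in>sets (gen_sigma M X N B).
        AE x in M. cond_indep_at M (gen_sigma M X N S) E G x)"
  unfolding cond_indep_def cond_indep_at_def ..

lemma AE_cond_indep_at_iff_uniform_measure:
  assumes P: "prob_space M" and T: "T \<in> sets M" "measure M T > 0"
    and F: "subalgebra M F" and F': "subalgebra M F'" and FF': "sets F \<subseteq> sets F'"
    and TF': "T \<in> sets F'" and trace: "\<And>A. A \<in> sets F' \<Longrightarrow> \<exists>B\<in>sets F. A \<inter> T = B \<inter> T"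
    and E: "E \<in> sets M" and G: "G \<in> sets M"
  shows "AE x in M. x \<in> T \<longrightarrow>
    (cond_indep_at M F' E G x \<longleftrightarrow> cond_indep_at (uniform_measure M T) F E G x)"
proof -
  interpret prob_space M by fact
  have eq: "AE x in M. x \<in> T \<longrightarrow>
      real_cond_exp M F' (indicator K) x = real_cond_exp (uniform_measure M T) F (indicator K) x"
    if "K \<in> sets M" for K
    using that by (intro AE_real_cond_exp_eq_uniform_measure[OF P T F F' FF' TF' trace])
      (auto intro: integrable_real_indicator simp: emeasure_eq_measure)
  show ?thesis
    using eq[OF E] eq[OF G] eq[OF sets.Int[OF E G]]
    by eventually_elim (simp add: cond_indep_at_def)
qed

lemma sigma_sets_trace_reduce:
  assumes T: "T \<subseteq> \<Omega>"
    and gen: "\<And>a. a \<in> G' \<Longrightarrow> a \<in> G \<or> T \<subseteq> a \<or> a \<inter> T = {}"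
    and A: "A \<in> sigma_sets \<Omega> G'"
  shows "\<exists>B\<in>sigma_sets \<Omega> G. A \<inter> T = B \<inter> T"
  using A
proof induct
  case (Basic a)
  from gen[OF Basic] show ?case
  proof (elim disjE)
    assume "a \<in> G" then show ?thesis by blast
  next
    assume "T \<subseteq> a" then show ?thesis
      using T by (intro bexI[of _ \<Omega>]) (auto intro: sigma_sets_top)
  next
    assume "a \<inter> T = {}" then show ?thesis
      by (intro bexI[of _ "{}"]) (auto intro: sigma_sets.Empty)
  qed
next
  case Empty
  then show ?case by (intro bexI[of _ "{}"]) (auto intro: sigma_sets.Empty)
next
  case (Compl a)
  then obtain b where b: "b \<in> sigma_sets \<Omega> G" "a \<inter> T = b \<inter> T" by blast
  then have "(\<Omega> - a) \<inter> T = (\<Omega> - b) \<inter> T" using T by blast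
  then show ?case using b(1) by (intro bexI[of _ "\<Omega> - b"]) (auto intro: sigma_sets.Compl)
next
  case (Union a)
  then obtain b where b: "\<And>i. b i \<in> sigma_sets \<Omega> G" "\<And>i. a i \<inter> T = b i \<inter> T" by metis
  then have "(\<Union>i. a i) \<inter> T = (\<Union>i. b i) \<inter> T" by blast
  then show ?case using b(1) by (intro bexI[of _ "\<Union>i. b i"]) (auto intro: sigma_sets.Union)
qed

lemma space_gen_sigma [simp]: "space (gen_sigma M X N A) = space M"
  unfolding gen_sigma_def by (simp add: space_measure_of_conv)

lemma sets_gen_sigma:
  "sets (gen_sigma M X N A) = sigma_sets (space M) {X v -` E \<inter> space M | v E. v \<in> A \<and> E \<in> sets (N v)}"
  unfolding gen_sigma_def by (rule sets_measure_of) auto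

lemma subalgebra_gen_sigma:
  assumes "\<And>v. v \<in> A \<Longrightarrow> X v \<in> M \<rightarrow>\<^sub>M N v"
  shows "subalgebra M (gen_sigma M X N A)"
  unfolding subalgebra_def sets_gen_sigma
  using assms by (auto intro!: sets.sigma_sets_subset measurable_sets)

lemma sets_gen_sigma_mono: "A \<subseteq> B \<Longrightarrow> sets (gen_sigma M X N A) \<subseteq> sets (gen_sigma M X N B)"
  unfolding sets_gen_sigma by (rule sigma_sets_mono') blast

lemma gen_sigma_uniform_measure [simp]: "gen_sigma (uniform_measure M T) X N A = gen_sigma M X N A"
  by (simp add: gen_sigma_def)

lemma fiber_in_gen_sigma:
  assumes "{d} \<in> sets (N c)" "c \<in> A"
  shows "{\<omega> \<in> space M. X c \<omega> = d} \<in> sets (gen_sigma M X N A)"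
proof -
  have "{\<omega> \<in> space M. X c \<omega> = d} = X c -` {d} \<inter> space M" by auto
  then show ?thesis
    unfolding sets_gen_sigma using assms by (auto intro!: sigma_sets.Basic)
qed

lemma gen_sigma_Un_singleton_trace_fiber:
  assumes "A \<in> sets (gen_sigma M X N (S \<union> {c}))"
  shows "\<exists>B\<in>sets (gen_sigma M X N S).
    A \<inter> {\<omega> \<in> space M. X c \<omega> = d} = B \<inter> {\<omega> \<in> space M. X c \<omega> = d}"
  using assms unfolding sets_gen_sigma
  by (intro sigma_sets_trace_reduce) auto

lemma AE_uniform_measure_iff_AE_on:
  assumes "emeasure M T \<noteq> 0" "emeasure M T < \<infinity>" and PQ: "AE x in M. x \<in> T \<longrightarrow> (P x \<longleftrightarrow> Q x)"
  shows "(AE x in uniform_measure M T. P x) \<longleftrightarrow> (AE x in M. x \<in> T \<longrightarrow> Q x)"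
  unfolding AE_uniform_measure[OF assms(1,2)]
proof
  assume "AE x in M. x \<in> T \<longrightarrow> P x"
  with PQ show "AE x in M. x \<in> T \<longrightarrow> Q x" by eventually_elim blast
next
  assume "AE x in M. x \<in> T \<longrightarrow> Q x"
  with PQ show "AE x in M. x \<in> T \<longrightarrow> P x" by eventually_elim blast
qed

lemma cond_indep_cond_on_iff_AE:
  assumes P: "prob_space M" and rv: "\<forall>v\<in>A \<union> B \<union> S \<union> {c}. X v \<in> M \<rightarrow>\<^sub>M N v"
    and d: "{d} \<in> sets (N c)" and pos: "measure M {\<omega> \<in> space M. X c \<omega> = d} > 0"
  shows "cond_indep (cond_on M X c d) X N A B S \<longleftrightarrow>
    (\<forall>E\<in>sets (gen_sigma M X N A). \<forall>G\<in>sets (gen_sigma M X N B).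
       AE x in M. X c x = d \<longrightarrow> cond_indep_at M (gen_sigma M X N (S \<union> {c})) E G x)"
proof -
  interpret prob_space M by fact
  define T where "T = {\<omega> \<in> space M. X c \<omega> = d}"
  let ?F = "gen_sigma M X N S" and ?F' = "gen_sigma M X N (S \<union> {c})"
  have TF': "T \<in> sets ?F'"
    unfolding T_def using d by (rule fiber_in_gen_sigma) simp
  have F: "subalgebra M ?F" and F': "subalgebra M ?F'"
    using rv by (auto intro!: subalgebra_gen_sigma)
  then have TM: "T \<in> sets M"
    using TF' by (auto simp: subalgebra_def)
  have pos': "measure M T > 0" unfolding T_def by (fact pos)
  have in_M: "sets (gen_sigma M X N A) \<subseteq> sets M" "sets (gen_sigma M X N B) \<subseteq> sets M"
    using subalgebra_gen_sigma[of A X M N] subalgebra_gen_sigma[of B X M N] rv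
    by (auto simp: subalgebra_def)
  have "(AE x in uniform_measure M T. cond_indep_at (uniform_measure M T) ?F E G x) \<longleftrightarrow>
        (AE x in M. X c x = d \<longrightarrow> cond_indep_at M ?F' E G x)"
    if E: "E \<in> sets (gen_sigma M X N A)" and G: "G \<in> sets (gen_sigma M X N B)" for E G
  proof -
    have local: "AE x in M. x \<in> T \<longrightarrow>
        (cond_indep_at M ?F' E G x \<longleftrightarrow> cond_indep_at (uniform_measure M T) ?F E G x)"
      using E G in_M
      by (intro AE_cond_indep_at_iff_uniform_measure[OF P TM pos' F F' _ TF'] sets_gen_sigma_mono
          gen_sigma_Un_singleton_trace_fiber[where M = M and X = X and c = c and d = d, folded T_def]) auto
    have "(AE x in uniform_measure M T. cond_indep_at (uniform_measure M T) ?F E G x) \<longleftrightarrow>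
          (AE x in M. x \<in> T \<longrightarrow> cond_indep_at M ?F' E G x)"
      using TM pos' local by (intro AE_uniform_measure_iff_AE_on) (auto simp: emeasure_eq_measure)
    also have "\<dots> \<longleftrightarrow> (AE x in M. X c x = d \<longrightarrow> cond_indep_at M ?F' E G x)"
      by (rule AE_cong) (simp add: T_def)
    finally show ?thesis .
  qed
  moreover have cond_on_eq: "cond_on M X c d = uniform_measure M T"
    by (simp add: cond_on_def T_def)
  ultimately show ?thesis
    unfolding cond_indep_iff_cond_indep_at cond_on_eq gen_sigma_uniform_measure by simp
qed

lemma cond_indep_cond_on_if_cond_indep:
  assumes P: "prob_space M" and rv: "\<forall>v\<in>A \<union> B \<union> S \<union> {c}. X v \<in> M \<rightarrow>\<^sub>M N v"
    and d: "{d} \<in> sets (N c)" and pos: "measure M {\<omega> \<in> space M. X c \<omega> = d} > 0"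
    and indep: "cond_indep M X N A B (S \<union> {c})"
  shows "cond_indep (cond_on M X c d) X N A B S"
proof (rule cond_indep_cond_on_iff_AE[OF P rv d pos, THEN iffD2])
  show "\<forall>E\<in>sets (gen_sigma M X N A). \<forall>G\<in>sets (gen_sigma M X N B).
      AE x in M. X c x = d \<longrightarrow> cond_indep_at M (gen_sigma M X N (S \<union> {c})) E G x"
    using indep unfolding cond_indep_iff_cond_indep_at by (auto elim!: eventually_mono)
qed

lemma cond_indep_if_cond_indep_cond_on:
  assumes P: "prob_space M" and rv: "\<forall>v\<in>A \<union> B \<union> S \<union> {c}. X v \<in> M \<rightarrow>\<^sub>M N v"
    and Nc: "N c = count_space Ds" and Ds: "countable Ds"
    and pos: "\<And>d. d \<in> Ds \<Longrightarrow> measure M {\<omega> \<in> space M. X c \<omega> = d} > 0"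
    and indep: "\<And>d. d \<in> Ds \<Longrightarrow> cond_indep (cond_on M X c d) X N A B S"
  shows "cond_indep M X N A B (S \<union> {c})"
  unfolding cond_indep_iff_cond_indep_at
proof (intro ballI)
  fix E G assume E: "E \<in> sets (gen_sigma M X N A)" and G: "G \<in> sets (gen_sigma M X N B)"
  let ?Q = "cond_indep_at M (gen_sigma M X N (S \<union> {c})) E G"
  have "\<forall>d\<in>Ds. AE x in M. X c x = d \<longrightarrow> ?Q x"
    using indep cond_indep_cond_on_iff_AE[OF P rv _ pos] E G Nc
    by auto
  then have "AE x in M. \<forall>d\<in>Ds. X c x = d \<longrightarrow> ?Q x"
    unfolding AE_ball_countable[OF Ds] .
  moreover have "AE x in M. X c x \<in> Ds"
    using measurable_space[OF bspec[OF rv, of c]] Nc by (intro AE_I2) simp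
  ultimately show "AE x in M. ?Q x"
    by eventually_elim blast
qed

theorem proposition1:
  fixes V Ctx Sys :: "'v set"
    and D Bi :: "('v \<times> 'v) set"
    and M :: "'a measure"
    and X :: "'v \<Rightarrow> 'a \<Rightarrow> 'b"
    and N :: "'v \<Rightarrow> 'b measure"
    and C1 Y :: 'v
    and d0 d1 :: 'b
  assumes finV: "finite V"
    and part: "Ctx \<union> Sys = V" "Ctx \<inter> Sys = {}"
    and C1_ctx: "C1 \<in> Ctx" and Y_sys: "Y \<in> Sys"
    and P: "prob_space M"
    and rv: "\<And>v. v \<in> V \<Longrightarrow> X v \<in> measurable M (N v)"
    and G: "admg V D Bi"
    and d01: "d0 \<noteq> d1"
    and NC1: "N C1 = count_space {d0, d1}"
    and pos0: "measure M {\<omega> \<in> space M. X C1 \<omega> = d0} > 0"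
    and pos1: "measure M {\<omega> \<in> space M. X C1 \<omega> = d1} > 0"
    and markov: "\<And>A B S. A \<subseteq> V \<Longrightarrow> B \<subseteq> V \<Longrightarrow> S \<subseteq> V \<Longrightarrow>
                   d_separated D Bi A B S \<Longrightarrow> cond_indep M X N A B S"
    and faithful: "\<And>A B S. A \<subseteq> V \<Longrightarrow> B \<subseteq> V \<Longrightarrow> S \<subseteq> V \<Longrightarrow>
                   cond_indep M X N A B S \<Longrightarrow> d_separated D Bi A B S"
    and transfer: "\<And>A B S. A \<subseteq> V \<Longrightarrow> B \<subseteq> V \<Longrightarrow> S \<subseteq> V \<Longrightarrow>
                   Y \<in> A \<union> B \<union> S \<Longrightarrow> C1 \<notin> A \<union> B \<union> S \<Longrightarrow>
                   cond_indep (cond_on M X C1 d0) X N A B S \<Longrightarrow>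
                   cond_indep (cond_on M X C1 d1) X N A B S"
    and no_edge: "(C1, Y) \<notin> D"
    and sets: "A \<subseteq> V" "B \<subseteq> V" "S \<subseteq> V" "Y \<in> A \<union> B \<union> S" "C1 \<notin> A \<union> B \<union> S"
  shows "(cond_indep (cond_on M X C1 d0) X N A B S \<longleftrightarrow> cond_indep M X N A B (S \<union> {C1}))
       \<and> (cond_indep M X N A B (S \<union> {C1}) \<longleftrightarrow> d_separated D Bi A B (S \<union> {C1}))"
proof -
  have C1V: "C1 \<in> V" using part C1_ctx by blast
  have rvs: "\<forall>v\<in>A \<union> B \<union> S \<union> {C1}. X v \<in> M \<rightarrow>\<^sub>M N v"
    using rv sets(1-3) C1V by blast
  have "cond_indep (cond_on M X C1 d0) X N A B S \<longleftrightarrow> cond_indep M X N A B (S \<union> {C1})"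
  proof
    assume indep0: "cond_indep (cond_on M X C1 d0) X N A B S"
    moreover have "cond_indep (cond_on M X C1 d1) X N A B S"
      using transfer[OF sets indep0] .
    ultimately show "cond_indep M X N A B (S \<union> {C1})"
      using pos0 pos1 by (intro cond_indep_if_cond_indep_cond_on[OF P rvs NC1]) auto
  next
    assume "cond_indep M X N A B (S \<union> {C1})"
    then show "cond_indep (cond_on M X C1 d0) X N A B S"
      using NC1 by (intro cond_indep_cond_on_if_cond_indep[OF P rvs _ pos0]) auto
  qed
  moreover have "cond_indep M X N A B (S \<union> {C1}) \<longleftrightarrow> d_separated D Bi A B (S \<union> {C1})"
    using markov[of A B "S \<union> {C1}"] faithful[of A B "S \<union> {C1}"] sets(1-3) C1V by blast
  ultimately show ?thesis ..
qed

end
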